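(* Let $c>1$ and $\Gamma=\{z\mapsto c^nz: n\in\mathbb{Z}\}$. A holomorphic function $F:G\to\mathbb{C}$ satisfies $F(c^nz,c^nw)=F(z,w)$ for all $(z,w)\in G$ and $n\in\mathbb{Z}$ if and only if there is an entire function $g$ with $F(z,w)=g\!\left(\frac{w}{z-w}\right)$ for all $(z,w)\in G$.
   Context: $\hat{\mathbb{C}}=\mathbb{C}\cup\{\infty\}$; $G=\hat{\mathbb{C}}^2\setminus\{(z,z):z\in\hat{\mathbb{C}}\}$. The map $(z,w)\mapsto w/(z-w)$ is understood as the holomorphic map $G\to\mathbb{C}$ obtained by continuous extension (value $0$ at $(\infty,w)$, value $-1$ at $(z,\infty)$); also $c^n\cdot\infty=\infty$. *)

theory Defs
  imports "HOL-Analysis.Analysis"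
begin

text \<open>The Riemann sphere: None plays the role of infinity.\<close>
type_synonym csphere = "complex option"

definition diagG :: "(csphere \<times> csphere) set" where
  "diagG = {(z, w). z \<noteq> w}"

definition chart_inv :: "bool \<Rightarrow> complex \<Rightarrow> csphere" where
  "chart_inv b u = (if b then (if u = 0 then None else Some (1 / u)) else Some u)"

definition holo2_on :: "(complex \<times> complex \<Rightarrow> complex) \<Rightarrow> (complex \<times> complex) set \<Rightarrow> bool" where
  "holo2_on f U \<longleftrightarrow> open U \<and>
     (\<forall>p\<in>U. \<exists>a b. (f has_derivative (\<lambda>(h, k). a * h + b * k)) (at p))"

text \<open>Holomorphy on G, the complex 2-manifold (sphere x sphere minus diagonal), via product charts.\<close>
definition holo_G :: "(csphere \<times> csphere \<Rightarrow> complex) \<Rightarrow> bool" where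
  "holo_G F \<longleftrightarrow> (\<forall>i j. holo2_on (\<lambda>(u, v). F (chart_inv i u, chart_inv j v))
                         {(u, v). (chart_inv i u, chart_inv j v) \<in> diagG})"

definition act :: "real \<Rightarrow> int \<Rightarrow> csphere \<Rightarrow> csphere" where
  "act c n z = map_option (\<lambda>x. (complex_of_real c powi n) * x) z"

text \<open>The map (z,w) maps to w/(z-w), continuously extended to G.\<close>
fun qmap :: "csphere \<Rightarrow> csphere \<Rightarrow> complex" where
  "qmap None w = 0"
| "qmap (Some z) None = -1"
| "qmap (Some z) (Some w) = w / (z - w)"

end

theory Submission
  imports Defs "HOL-Complex_Analysis.Complex_Analysis"
begin

text \<open>Fix the ratio s = w/z. Then l \<mapsto> F(l, s l) is holomorphic on the punctured plane and
  invariant under l \<mapsto> c l, so its modulus is bounded by its maximum over the compact annulus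
  1 \<le> |l| \<le> c; by the maximum modulus principle it is constant. Hence F depends only on w/z on
  the finite part of G, i.e. only on w/(z - w). Restricting F to a holomorphic section of that
  quotient map yields the entire function g, and the identity F = g \<circ> qmap extends from the
  points with both coordinates finite and nonzero to all of G by continuity in the charts.\<close>

lemma holo2_on_imp_isCont:
  assumes "holo2_on f U" "p \<in> U" shows "isCont f p"
  using assms unfolding holo2_on_def by (meson has_derivative_continuous)

lemma holo2_on_compose_field_differentiable:
  assumes "holo2_on f U" "(p t, q t) \<in> U"
    and "(p has_field_derivative p') (at t)" "(q has_field_derivative q') (at t)"
  shows "(\<lambda>t. f (p t, q t)) field_differentiable (at t)"
proof -
  obtain a b where f': "(f has_derivative (\<lambda>(h, k). a * h + b * k)) (at (p t, q t))"
    using assms(1,2) unfolding holo2_on_def by blast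
  have "((\<lambda>t. (p t, q t)) has_derivative (\<lambda>h. (p' * h, q' * h))) (at t)"
    by (intro has_derivative_Pair has_field_derivative_imp_has_derivative assms)
  from diff_chain_at[OF this f']
  have "((\<lambda>t. f (p t, q t)) has_derivative (\<lambda>h. (a * p' + b * q') * h)) (at t)"
    by (simp add: o_def algebra_simps)
  then show ?thesis
    unfolding field_differentiable_def has_field_derivative_def by blast
qed

lemma power_int_scale_into_interval:
  fixes c r :: real assumes "c > 1" "r > 0"
  obtains n :: int where "1 \<le> c powi n * r" "c powi n * r \<le> c"
proof -
  define k where "k = \<lfloor>log c r\<rfloor>"
  have k: "c powr k \<le> r" "r < c powr (k + 1)"
    using floor_log_eq_powr_iff[OF assms(2,1)] k_def by blast+
  have pos: "c powr k > 0" using assms by simp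
  have inverse: "c powi (-k) = 1 / c powr k"
    using assms powr_real_of_int'[of c k] by (simp add: power_int_minus_divide)
  have "c powr (k + 1) = c powr k * c" using assms by (simp add: powr_add)
  then have "1 \<le> c powi (-k) * r \<and> c powi (-k) * r \<le> c"
    using k pos unfolding inverse by (simp add: field_simps)
  then show ?thesis using that by blast
qed

lemma dilation_invariant_holomorphic_constant:
  fixes h :: "complex \<Rightarrow> complex" and c :: real
  assumes c: "c > 1" and hol: "h holomorphic_on -{0}"
    and inv: "\<And>n z. z \<noteq> 0 \<Longrightarrow> h (of_real (c powi n) * z) = h z"
  shows "h constant_on -{0}"
proof -
  define K where "K = {z::complex. 1 \<le> norm z \<and> norm z \<le> c}"
  have "compact K"
    unfolding K_def compact_eq_bounded_closed bounded_iff Collect_conj_eq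
    by (intro conjI closed_Int closed_Collect_le continuous_intros) blast
  moreover have "1 \<in> K" using c unfolding K_def by simp
  moreover have K_sub: "K \<subseteq> -{0}" unfolding K_def by auto
  moreover have "continuous_on K (\<lambda>z. norm (h z))"
    using holomorphic_on_imp_continuous_on[OF hol] K_sub
    by (intro continuous_intros) (auto intro: continuous_on_subset)
  ultimately obtain \<xi> where \<xi>: "\<xi> \<in> K" "\<And>y. y \<in> K \<Longrightarrow> norm (h y) \<le> norm (h \<xi>)"
    using continuous_attains_sup[of K "\<lambda>z. norm (h z)"] by blast
  have bound: "norm (h y) \<le> norm (h \<xi>)" if "y \<in> -{0}" for y
  proof -
    have "norm y > 0" using that by simp
    then obtain n where n: "1 \<le> c powi n * norm y" "c powi n * norm y \<le> c"
      using power_int_scale_into_interval[OF c] by blast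
    have "norm (of_real (c powi n) * y) = c powi n * norm y"
      using c by (simp add: norm_mult norm_power_int)
    then have "of_real (c powi n) * y \<in> K" using n unfolding K_def by simp
    then have "norm (h (of_real (c powi n) * y)) \<le> norm (h \<xi>)" by (rule \<xi>(2))
    then show ?thesis using inv[of y n] that by simp
  qed
  show ?thesis
  proof (rule maximum_modulus_principle[OF hol _ _ _ order_refl])
    show "connected (- {0::complex})" by (simp add: connected_punctured_universe)
    show "\<xi> \<in> - {0}" using \<xi> K_sub by auto
  qed (use bound in auto)
qed

lemma chart_inv_inj: "chart_inv i a = chart_inv i b \<Longrightarrow> a = b"
  by (auto simp: chart_inv_def split: if_splits)

lemma chart_inv_nonzero: "a \<noteq> 0 \<Longrightarrow> \<exists>x. chart_inv i a = Some x \<and> x \<noteq> 0"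
  by (auto simp: chart_inv_def)

lemma chart_inv_surj: "chart_inv (z = None) (case z of None \<Rightarrow> 0 | Some x \<Rightarrow> x) = z"
  by (cases z) (auto simp: chart_inv_def)

lemma open_chart_domain:
  "holo_G F \<Longrightarrow> open {(u, v). (chart_inv i u, chart_inv j v) \<in> diagG}"
  unfolding holo_G_def holo2_on_def by blast

lemma continuous_on_qmap_chart:
  "continuous_on {(u, v). (chart_inv i u, chart_inv j v) \<in> diagG}
     (\<lambda>(u, v). qmap (chart_inv i u) (chart_inv j v))"
proof (cases i; cases j)
  assume "i" "j"
  have "continuous_on {(u, v). (chart_inv i u, chart_inv j v) \<in> diagG}
          (\<lambda>p::complex \<times> complex. fst p / (snd p - fst p))"
    by (intro continuous_intros) (auto simp: chart_inv_def diagG_def \<open>i\<close> \<open>j\<close> split: if_splits)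
  then show ?thesis
    by (rule continuous_on_eq)
       (auto simp: chart_inv_def diagG_def \<open>i\<close> \<open>j\<close> field_simps split: if_splits)
next
  assume "i" "\<not> j"
  have "continuous_on {(u, v). (chart_inv i u, chart_inv j v) \<in> diagG}
          (\<lambda>p::complex \<times> complex. fst p * snd p / (1 - fst p * snd p))"
    by (intro continuous_intros)
       (auto simp: chart_inv_def diagG_def \<open>i\<close> \<open>\<not> j\<close> field_simps split: if_splits)
  then show ?thesis
    by (rule continuous_on_eq)
       (auto simp: chart_inv_def diagG_def \<open>i\<close> \<open>\<not> j\<close> field_simps split: if_splits)
next
  assume "\<not> i" "j"
  have "continuous_on {(u, v). (chart_inv i u, chart_inv j v) \<in> diagG}
          (\<lambda>p::complex \<times> complex. 1 / (fst p * snd p - 1))"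
    by (intro continuous_intros)
       (auto simp: chart_inv_def diagG_def \<open>\<not> i\<close> \<open>j\<close> field_simps split: if_splits)
  then show ?thesis
    by (rule continuous_on_eq)
       (auto simp: chart_inv_def diagG_def \<open>\<not> i\<close> \<open>j\<close> field_simps split: if_splits)
next
  assume "\<not> i" "\<not> j"
  have "continuous_on {(u, v). (chart_inv i u, chart_inv j v) \<in> diagG}
          (\<lambda>p::complex \<times> complex. snd p / (fst p - snd p))"
    by (intro continuous_intros) (auto simp: chart_inv_def diagG_def \<open>\<not> i\<close> \<open>\<not> j\<close> split: if_splits)
  then show ?thesis
    by (rule continuous_on_eq) (auto simp: chart_inv_def diagG_def \<open>\<not> i\<close> \<open>\<not> j\<close> split: if_splits)
qed

lemma act_Some: "act c n (Some x) = Some (complex_of_real c powi n * x)"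
  by (simp add: act_def)

lemma act_in_diagG: "c > 0 \<Longrightarrow> (z, w) \<in> diagG \<Longrightarrow> (act c n z, act c n w) \<in> diagG"
  by (cases z; cases w) (auto simp: diagG_def act_def)

lemma qmap_act:
  assumes "c > 0" shows "qmap (act c n z) (act c n w) = qmap z w"
proof (cases z; cases w)
  fix x y assume "z = Some x" "w = Some y"
  moreover have "complex_of_real c powi n \<noteq> 0" using assms by simp
  then have "(complex_of_real c powi n * y) /
      (complex_of_real c powi n * x - complex_of_real c powi n * y) = y / (x - y)"
    by (simp only: right_diff_distrib[symmetric] mult_divide_mult_cancel_left_if) simp
  ultimately show ?thesis by (simp add: act_Some)
qed (auto simp: act_def)

text \<open>A holomorphic section of qmap: the point (1/t, 1/(1 + t)), read in the chart at infinity
  of both factors, is mapped to t.\<close>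
definition qsection :: "complex \<Rightarrow> csphere \<times> csphere" where
  "qsection t = (chart_inv True t, chart_inv True (1 + t))"

lemma holomorphic_on_qsection_comp:
  assumes "holo_G F" shows "(\<lambda>t. F (qsection t)) holomorphic_on UNIV"
  unfolding holomorphic_on_def
proof
  fix t :: complex
  have mem: "(t, 1 + t) \<in> {(u, v). (chart_inv True u, chart_inv True v) \<in> diagG}"
    unfolding diagG_def using chart_inv_inj[of True t "1 + t"] by auto
  have deriv: "((\<lambda>t. 1 + t) has_field_derivative 1) (at t)"
    by (auto intro!: derivative_eq_intros)
  have "(\<lambda>t. F (chart_inv True t, chart_inv True (1 + t))) field_differentiable (at t)"
    using holo2_on_compose_field_differentiable[where p = "\<lambda>t. t" and q = "\<lambda>t. 1 + t",
        OF assms[unfolded holo_G_def, rule_format, of True True] mem DERIV_ident deriv]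
    by simp
  then have "(\<lambda>t. F (qsection t)) field_differentiable (at t)"
    unfolding qsection_def .
  then show "(\<lambda>t. F (qsection t)) field_differentiable (at t within UNIV)" by simp
qed

lemma invariant_eq_qsection_comp:
  assumes c: "c > 1" and F: "holo_G F"
    and inv: "\<forall>z w n. (z, w) \<in> diagG \<longrightarrow> F (act c n z, act c n w) = F (z, w)"
    and xy: "x \<noteq> 0" "y \<noteq> 0" "x \<noteq> y"
  shows "F (Some x, Some y) = F (qsection (y / (x - y)))"
proof -
  define s where "s = y / x"
  define t where "t = y / (x - y)"
  define h where "h l = F (Some l, Some (s * l))" for l
  have s: "s \<noteq> 1" "s \<noteq> 0" using xy unfolding s_def by (auto simp: divide_simps)
  have t: "t \<noteq> 0" "1 + t \<noteq> 0" using xy unfolding t_def by (auto simp: divide_simps)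
  have "h holomorphic_on -{0}"
    unfolding holomorphic_on_def
  proof
    fix l :: complex assume "l \<in> -{0}"
    then have "(l, s * l) \<in> {(u, v). (chart_inv False u, chart_inv False v) \<in> diagG}"
      using s unfolding diagG_def chart_inv_def by auto
    from holo2_on_compose_field_differentiable[where p = "\<lambda>t. t" and q = "\<lambda>t. s * t"
        and p' = 1 and q' = s,
        OF F[unfolded holo_G_def, rule_format, of False False] this]
    have "h field_differentiable (at l)"
      unfolding h_def by (auto simp: chart_inv_def intro!: derivative_eq_intros)
    then show "h field_differentiable (at l within -{0})"
      using field_differentiable_at_within by blast
  qed
  moreover have "h (of_real (c powi n) * l) = h l" if "l \<noteq> 0" for n l
  proof -
    have "(Some l, Some (s * l)) \<in> diagG" using that s by (auto simp: diagG_def)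
    then have "F (act c n (Some l), act c n (Some (s * l))) = F (Some l, Some (s * l))"
      using inv by blast
    then show ?thesis unfolding h_def by (simp add: act_Some mult.left_commute)
  qed
  ultimately have "h constant_on -{0}"
    by (rule dilation_invariant_holomorphic_constant[OF c])
  then have "h x = h (1 / t)" using xy t unfolding constant_on_def by auto
  moreover have "1 / (1 + t) = s * (1 / t)"
    using xy t unfolding s_def t_def by (simp add: field_simps)
  then have "F (qsection t) = h (1 / t)"
    unfolding qsection_def h_def chart_inv_def using t by simp
  ultimately show ?thesis using xy unfolding t_def h_def s_def by simp
qed

text \<open>Every point of a chart domain is the limit of (u + e, v + e) as e \<rightarrow> 0, and for small
  e \<noteq> 0 this point has both coordinates finite and nonzero.\<close>
lemma eq_qmap_comp_if_eq_on_finite_part: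
  assumes F: "holo_G F" and g: "continuous_on UNIV g"
    and finite_part: "\<And>x y. x \<noteq> 0 \<Longrightarrow> y \<noteq> 0 \<Longrightarrow> x \<noteq> y \<Longrightarrow> F (Some x, Some y) = g (y / (x - y))"
    and zw: "(z, w) \<in> diagG"
  shows "F (z, w) = g (qmap z w)"
proof -
  define i where "i = (z = None)"
  define j where "j = (w = None)"
  define u where "u = (case z of None \<Rightarrow> 0 | Some x \<Rightarrow> x)"
  define v where "v = (case w of None \<Rightarrow> 0 | Some x \<Rightarrow> x)"
  define U where "U = {(u, v). (chart_inv i u, chart_inv j v) \<in> diagG}"
  define \<Phi> where "\<Phi> = (\<lambda>(u, v). F (chart_inv i u, chart_inv j v))"
  define Q where "Q = (\<lambda>(u, v). qmap (chart_inv i u) (chart_inv j v))"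
  define \<gamma> where "\<gamma> e = (u + e, v + e)" for e :: complex
  have z: "z = chart_inv i u" and w: "w = chart_inv j v"
    unfolding i_def j_def u_def v_def by (simp_all add: chart_inv_surj)
  have uv: "(u, v) \<in> U" unfolding U_def using zw z w by simp
  have U: "open U" unfolding U_def by (rule open_chart_domain[OF F])
  have "((\<lambda>e. (u + e, v + e)) \<longlongrightarrow> (u + 0, v + 0)) (at (0::complex))"
    by (intro tendsto_intros)
  then have \<gamma>: "(\<gamma> \<longlongrightarrow> (u, v)) (at 0)" unfolding \<gamma>_def by simp
  have "isCont Q (u, v)"
    using continuous_on_qmap_chart[of i j] U uv continuous_on_eq_continuous_at
    unfolding Q_def U_def by blast
  then have lim_Q: "((\<lambda>e. Q (\<gamma> e)) \<longlongrightarrow> Q (u, v)) (at 0)"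
    using \<gamma> by (rule isCont_tendsto_compose)
  have "isCont g (Q (u, v))" using g by (simp add: continuous_on_eq_continuous_at)
  from isCont_tendsto_compose[OF this lim_Q]
  have lim_gQ: "((\<lambda>e. g (Q (\<gamma> e))) \<longlongrightarrow> g (Q (u, v))) (at 0)" .
  have "\<forall>\<^sub>F e in at 0. \<gamma> e \<in> U"
    using topological_tendstoD[OF \<gamma> U uv] .
  moreover have "\<forall>\<^sub>F e in at 0. e \<noteq> - u" "\<forall>\<^sub>F e in at 0. e \<noteq> - v"
    using eventually_neq_at_within by blast+
  ultimately have "\<forall>\<^sub>F e in at 0. g (Q (\<gamma> e)) = \<Phi> (\<gamma> e)"
  proof eventually_elim
    case (elim e)
    have "u + e \<noteq> 0" "v + e \<noteq> 0" using elim(2,3) by (auto simp: add_eq_0_iff)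
    then obtain x y where xy: "chart_inv i (u + e) = Some x" "x \<noteq> 0"
      "chart_inv j (v + e) = Some y" "y \<noteq> 0"
      using chart_inv_nonzero by metis
    have "x \<noteq> y" using elim(1) xy unfolding U_def \<gamma>_def diagG_def by auto
    then show ?case using finite_part[OF xy(2,4)] xy unfolding \<Phi>_def Q_def \<gamma>_def by simp
  qed
  with lim_gQ have lim_g: "((\<lambda>e. \<Phi> (\<gamma> e)) \<longlongrightarrow> g (Q (u, v))) (at 0)"
    by (rule Lim_transform_eventually)
  have "isCont \<Phi> (u, v)"
    using holo2_on_imp_isCont F uv unfolding holo_G_def U_def \<Phi>_def by blast
  then have lim_\<Phi>: "((\<lambda>e. \<Phi> (\<gamma> e)) \<longlongrightarrow> \<Phi> (u, v)) (at 0)"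
    using \<gamma> by (rule isCont_tendsto_compose)
  have "\<Phi> (u, v) = g (Q (u, v))"
    using tendsto_unique[OF _ lim_\<Phi> lim_g] by simp
  then show ?thesis unfolding \<Phi>_def Q_def z w by simp
qed

theorem mainTheorem13:
  fixes c :: real and F :: "csphere \<times> csphere \<Rightarrow> complex"
  assumes "c > 1" and "holo_G F"
  shows "(\<forall>z w n. (z, w) \<in> diagG \<longrightarrow> F (act c n z, act c n w) = F (z, w)) \<longleftrightarrow>
         (\<exists>g. g holomorphic_on UNIV \<and> (\<forall>z w. (z, w) \<in> diagG \<longrightarrow> F (z, w) = g (qmap z w)))"
proof
  assume inv: "\<forall>z w n. (z, w) \<in> diagG \<longrightarrow> F (act c n z, act c n w) = F (z, w)"
  define g where "g t = F (qsection t)" for t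
  have g: "g holomorphic_on UNIV"
    unfolding g_def by (rule holomorphic_on_qsection_comp[OF assms(2)])
  have "F (Some x, Some y) = g (y / (x - y))" if "x \<noteq> 0" "y \<noteq> 0" "x \<noteq> y" for x y
    using invariant_eq_qsection_comp[OF assms inv that] unfolding g_def .
  then have "F (z, w) = g (qmap z w)" if "(z, w) \<in> diagG" for z w
    by (rule eq_qmap_comp_if_eq_on_finite_part[OF assms(2)
          holomorphic_on_imp_continuous_on[OF g] _ that])
  with g show "\<exists>g. g holomorphic_on UNIV \<and> (\<forall>z w. (z, w) \<in> diagG \<longrightarrow> F (z, w) = g (qmap z w))"
    by blast
next
  assume "\<exists>g. g holomorphic_on UNIV \<and> (\<forall>z w. (z, w) \<in> diagG \<longrightarrow> F (z, w) = g (qmap z w))"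
  then obtain g where g: "\<And>z w. (z, w) \<in> diagG \<Longrightarrow> F (z, w) = g (qmap z w)" by blast
  have "c > 0" using assms(1) by simp
  then show "\<forall>z w n. (z, w) \<in> diagG \<longrightarrow> F (act c n z, act c n w) = F (z, w)"
    using g act_in_diagG qmap_act by simp
qed

end
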